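(* Let $0<\lambda\le 1$. If $f\in\mathcal{U}(\lambda)$, then \[-\lambda(2+\lambda)\le \det T_{2,1}(f)\le 1.\] If moreover $f\in\mathcal{U}_s(\lambda)$, then \[-\lambda^2\le \det T_{3,1}(f)\le \begin{cases}1, & 0<\lambda\le\lambda_0,\\ \lambda^2(1+\lambda)(3+\lambda), & \lambda_0\le\lambda\le 1,\end{cases}\] where $\lambda_0=0.44762\ldots$ is the positive real root of $\lambda^2(1+\lambda)(3+\lambda)-1=0$. All inequalities are sharp.
   Context: $\mathbb{D}=\{z\in\mathbb{C}:|z|<1\}$. $\mathcal{A}$ is the class of analytic functions $f$ on $\mathbb{D}$ with $f(0)=0$, $f'(0)=1$, written $f(z)=z+a_2z^2+a_3z^3+\cdots$. For $0<\lambda\le1$, $\mathcal{U}(\lambda)=\{f\in\mathcal{A}: |(z/f(z))^2f'(z)-1|<\lambda \text{ for all } z\in\mathbb{D}\}$, and $\mathcal{U}_s(\lambda)=\{f\in\mathcal{U}(\lambda): \frac{f(z)}{z}\prec\frac{1}{(1+z)(1+\lambda z)}\}$, where $g\prec h$ (subordination) means $g=h\circ\omega$ for some analytic $\omega:\mathbb{D}\to\mathbb{D}$ with $\omega(0)=0$. For $f\in\mathcal{A}$, $\det T_{2,1}(f)=1-|a_2|^2$ and $\det T_{3,1}(f)=2\,\mathrm{Re}(a_2^2\overline{a_3})-2|a_2|^2-|a_3|^2+1$ are the determinants of the Hermitian Toeplitz matrices $\begin{pmatrix}1&a_2\\ \overline{a_2}&1\end{pmatrix}$ and $\begin{pmatrix}1&a_2&a_3\\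 \overline{a_2}&1&a_2\\ \overline{a_3}&\overline{a_2}&1\end{pmatrix}$ (real numbers, possibly negative). *)

theory Defs
  imports "HOL-Analysis.Analysis"
begin

definition classA :: "(complex \<Rightarrow> complex) set" where
  "classA = {f. f holomorphic_on ball 0 1 \<and> f 0 = 0 \<and> deriv f 0 = 1}"

definition coeff :: "(complex \<Rightarrow> complex) \<Rightarrow> nat \<Rightarrow> complex" where
  "coeff f n = (deriv ^^ n) f 0 / of_nat (fact n)"

text \<open>U(lambda). At z = 0 the expression (z/f z)^2 f'(z) equals 1 by continuity,
  so the condition is vacuous there; it is imposed on the punctured disc.\<close>
definition classU :: "real \<Rightarrow> (complex \<Rightarrow> complex) set" where
  "classU lam = {f \<in> classA. \<forall>z \<in> ball 0 1 - {0}.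
      cmod ((z / f z)^2 * deriv f z - 1) < lam}"

definition subordinate :: "(complex \<Rightarrow> complex) \<Rightarrow> (complex \<Rightarrow> complex) \<Rightarrow> bool" where
  "subordinate g h \<longleftrightarrow> (\<exists>\<omega>. \<omega> holomorphic_on ball 0 1 \<and> \<omega> ` ball 0 1 \<subseteq> ball 0 1
      \<and> \<omega> 0 = 0 \<and> (\<forall>z \<in> ball 0 1. g z = h (\<omega> z)))"

text \<open>U_s(lambda); f(z)/z is taken with its removable value 1 at z = 0.\<close>
definition classUs :: "real \<Rightarrow> (complex \<Rightarrow> complex) set" where
  "classUs lam = {f \<in> classU lam.
      subordinate (\<lambda>z. if z = 0 then 1 else f z / z)
                  (\<lambda>z. 1 / ((1 + z) * (1 + complex_of_real lam * z)))}"

definition detT21 :: "(complex \<Rightarrow> complex) \<Rightarrow> real" where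
  "detT21 f = 1 - (cmod (coeff f 2))^2"

definition detT31 :: "(complex \<Rightarrow> complex) \<Rightarrow> real" where
  "detT31 f = 2 * Re ((coeff f 2)^2 * cnj (coeff f 3)) - 2 * (cmod (coeff f 2))^2
              - (cmod (coeff f 3))^2 + 1"

definition lambda0 :: real where
  "lambda0 = (THE l. l > 0 \<and> l^2 * (1 + l) * (3 + l) - 1 = 0)"

end

(* Write g(z) = z / f(z).  Membership of f in U(lambda) says that the defect g - z g' - 1 is
   bounded by lambda on the disc; as it vanishes to second order at 0, Schwarz's lemma bounds it
   by lambda |z|^2.  This gives |a_3 - a_2^2| <= lambda and |g(z) - 1 + a_2 z| <= lambda |z|^2,
   and since g has no zeros, Brouwer's fixed point theorem forces |a_2| <= 1 + lambda.  Together
   with det T_{3,1} = (1 - |a_2|^2)^2 - |a_3 - a_2^2|^2 this yields the bounds for T_{2,1} and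
   the lower bound for T_{3,1}.
   For f in U_s(lambda) the subordination f(z)/z = h(w(z)) expresses a_2 and a_3 through the
   first two Taylor coefficients c_1, c_2 of the Schwarz function w; the estimate
   |c_2| <= 1 - |c_1|^2 turns the upper bound for T_{3,1} into a real problem in |c_1|^2.
   The bounds are attained by z, z/((1 + z)(1 + lambda z)) and z/(1 + z + lambda z^2); for the
   last one the Schwarz function is the root of a quadratic equation vanishing at 0. *)

theory Submission
  imports Defs "HOL-Complex_Analysis.Complex_Analysis"
begin

section \<open>Derivatives at the origin\<close>

lemma deriv_cong_open:
  assumes "open S" "a \<in> S" "\<And>z. z \<in> S \<Longrightarrow> f z = g z"
  shows "deriv f a = deriv g a"
  using eventually_nhds_in_open[OF assms(1,2)]
  by (intro deriv_cong_ev) (auto elim!: eventually_mono intro: assms(3))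

definition zdiv :: "(complex \<Rightarrow> complex) \<Rightarrow> complex \<Rightarrow> complex" where
  "zdiv h z = (if z = 0 then deriv h 0 else h z / z)"

lemma zdiv_0: "zdiv h 0 = deriv h 0"
  by (simp add: zdiv_def)

lemma mult_zdiv: "h 0 = 0 \<Longrightarrow> z * zdiv h z = h z"
  by (simp add: zdiv_def)

lemma holomorphic_zdiv:
  assumes "h holomorphic_on S" "0 \<in> interior S" "h 0 = 0"
  shows "zdiv h holomorphic_on S"
proof -
  have "(\<lambda>z. if z = 0 then deriv h 0 else (h z - h 0) / (z - 0)) holomorphic_on S"
    by (rule pole_lemma) (use assms in auto)
  also have "(\<lambda>z. if z = 0 then deriv h 0 else (h z - h 0) / (z - 0)) = zdiv h"
    using assms(3) by (auto simp: zdiv_def fun_eq_iff)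
  finally show ?thesis .
qed

lemma higher_deriv_zmult:
  assumes "G holomorphic_on S" "open S" "0 \<in> S"
  shows "(deriv ^^ Suc n) (\<lambda>z. z * G z) 0 = of_nat (Suc n) * (deriv ^^ n) G 0"
proof -
  have "(deriv ^^ Suc n) (\<lambda>z. z * G z) 0 =
     (\<Sum>i = 0..Suc n. of_nat (Suc n choose i) * (deriv ^^ i) (\<lambda>w. w) 0 * (deriv ^^ (Suc n - i)) G 0)"
    by (rule higher_deriv_mult) (use assms in \<open>auto intro: holomorphic_intros\<close>)
  also have "\<dots> = (\<Sum>i = 0..Suc n. if i = 1 then of_nat (Suc n) * (deriv ^^ n) G 0 else 0)"
    by (rule sum.cong) auto
  finally show ?thesis
    by simp
qed

lemma coeff_zmult:
  assumes "G holomorphic_on S" "open S" "0 \<in> S"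
  shows "coeff (\<lambda>z. z * G z) (Suc n) = coeff G n"
proof -
  have "(of_nat (fact (Suc n)) :: complex) = of_nat (Suc n) * of_nat (fact n)"
    by (metis fact_Suc of_nat_id of_nat_mult)
  then show ?thesis
    unfolding coeff_def higher_deriv_zmult[OF assms] by (simp del: of_nat_Suc)
qed

lemma deriv_deriv_eq_zdiv:
  assumes "h holomorphic_on S" "open S" "0 \<in> S" "h 0 = 0"
  shows "deriv (deriv h) 0 = 2 * deriv (zdiv h) 0"
proof -
  have "zdiv h holomorphic_on S"
    by (rule holomorphic_zdiv) (use assms in \<open>auto simp: interior_open\<close>)
  from higher_deriv_zmult[OF this assms(2,3), of 1] show ?thesis
    by (simp add: mult_zdiv[of h, OF assms(4)] numeral_2_eq_2)
qed

lemma deriv_compose_holomorphic: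
  assumes holh: "h holomorphic_on T" and T: "open T"
    and holw: "w holomorphic_on S" and S: "open S" and wS: "w ` S \<subseteq> T" and a: "a \<in> S"
    and F: "\<And>z. z \<in> S \<Longrightarrow> F z = h (w z)"
  shows "deriv F a = deriv h (w a) * deriv w a"
    and "deriv (deriv F) a =
           deriv (deriv h) (w a) * (deriv w a)^2 + deriv h (w a) * deriv (deriv w) a"
proof -
  have dh: "(h has_field_derivative deriv h u) (at u)" if "u \<in> T" for u
    using holh T that by (rule holomorphic_derivI)
  have ddh: "(deriv h has_field_derivative deriv (deriv h) u) (at u)" if "u \<in> T" for u
    using holomorphic_deriv[OF holh T] T that by (rule holomorphic_derivI)
  have dw: "(w has_field_derivative deriv w z) (at z)" if "z \<in> S" for z
    using holw S that by (rule holomorphic_derivI)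
  have ddw: "(deriv w has_field_derivative deriv (deriv w) z) (at z)" if "z \<in> S" for z
    using holomorphic_deriv[OF holw S] S that by (rule holomorphic_derivI)
  have dF: "deriv F z = deriv h (w z) * deriv w z" if z: "z \<in> S" for z
  proof -
    have "deriv F z = deriv (\<lambda>u. h (w u)) z"
      by (rule deriv_cong_open[OF S z F])
    also have "\<dots> = deriv h (w z) * deriv w z"
      by (rule DERIV_imp_deriv, rule DERIV_chain2[OF dh dw[OF z]]) (use wS z in auto)
    finally show ?thesis .
  qed
  then show "deriv F a = deriv h (w a) * deriv w a" using a .
  have "deriv (deriv F) a = deriv (\<lambda>z. deriv h (w z) * deriv w z) a"
    by (rule deriv_cong_open[OF S a dF])
  also have "\<dots> = deriv (deriv h) (w a) * deriv w a * deriv w a + deriv (deriv w) a * deriv h (w a)"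
  proof (rule DERIV_imp_deriv, rule DERIV_mult[OF _ ddw[OF a]])
    show "((\<lambda>z. deriv h (w z)) has_field_derivative deriv (deriv h) (w a) * deriv w a) (at a)"
      by (rule DERIV_chain2[OF ddh dw[OF a]]) (use wS a in auto)
  qed
  finally show "deriv (deriv F) a =
      deriv (deriv h) (w a) * (deriv w a)^2 + deriv h (w a) * deriv (deriv w) a"
    by (simp add: power2_eq_square mult.commute)
qed

lemma deriv_inverse_quadratic:
  fixes \<alpha> \<beta> :: complex
  defines "G \<equiv> \<lambda>z. 1 / (1 + \<alpha> * z + \<beta> * z^2)"
  shows "deriv G 0 = - \<alpha>" and "deriv (deriv G) 0 = 2 * (\<alpha>^2 - \<beta>)"
proof -
  define S where "S = {z. 1 + \<alpha> * z + \<beta> * z^2 \<noteq> 0}"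
  have S: "open S" "0 \<in> S"
    unfolding S_def by (intro open_Collect_neq continuous_intros) simp_all
  have dG: "(G has_field_derivative -(\<alpha> + 2 * \<beta> * z) / (1 + \<alpha> * z + \<beta> * z^2)^2) (at z)"
    if "z \<in> S" for z
    using that unfolding G_def S_def
    by (auto intro!: derivative_eq_intros simp: field_simps power2_eq_square)
  show "deriv G 0 = - \<alpha>"
    using DERIV_imp_deriv[OF dG[OF S(2)]] by simp
  have "deriv (deriv G) 0 = deriv (\<lambda>z. -(\<alpha> + 2 * \<beta> * z) / (1 + \<alpha> * z + \<beta> * z^2)^2) 0"
    by (rule deriv_cong_open[OF S]) (simp add: DERIV_imp_deriv[OF dG])
  also have "\<dots> = 2 * (\<alpha>^2 - \<beta>)"
    by (rule DERIV_imp_deriv) (auto intro!: derivative_eq_intros simp: field_simps power2_eq_square)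
  finally show "deriv (deriv G) 0 = 2 * (\<alpha>^2 - \<beta>)" .
qed

section \<open>Variants of Schwarz's lemma\<close>

lemma Schwarz_Lemma_le:
  assumes hol: "h holomorphic_on ball 0 1" and h0: "h 0 = 0"
    and bound: "\<And>z. z \<in> ball 0 1 \<Longrightarrow> norm (h z) \<le> c"
  shows "z \<in> ball 0 1 \<Longrightarrow> norm (h z) \<le> c * norm z" and "norm (deriv h 0) \<le> c"
proof -
  have c0: "0 \<le> c" using bound[of 0] h0 by simp
  (* Schwarz's lemma needs a strict bound, so it is applied to h / (c + e) for every e > 0. *)
  have eps: "norm (h z) \<le> (c + e) * norm z \<and> norm (deriv h 0) \<le> c + e"
    if "0 < e" "z \<in> ball 0 1" for e z
  proof -
    define L where "L = c + e"
    define k where "k = (\<lambda>z. h z / of_real L)"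
    have ce: "0 < L" using c0 that by (simp add: L_def)
    have holk: "k holomorphic_on ball 0 1"
      unfolding k_def by (intro holomorphic_intros hol) (use ce in auto)
    have k0: "k 0 = 0" by (simp add: k_def h0)
    have "norm (k z) < 1" if "norm z < 1" for z
    proof -
      have "norm (h z) < L" using bound[of z] that \<open>0 < e\<close> by (simp add: L_def)
      then show ?thesis using ce by (simp add: k_def norm_divide divide_less_eq)
    qed
    note S = Schwarz_Lemma[OF holk k0 this]
    have "deriv k 0 = deriv h 0 / of_real L"
      unfolding k_def by (rule deriv_cdivide_right) (rule holomorphic_on_imp_differentiable_at[OF hol], auto)
    then have "norm (deriv h 0) \<le> L"
      using S(2)[of 0] ce by (simp add: norm_divide divide_le_eq)
    moreover have "norm (h z) \<le> L * norm z"
      using S(1)[of z] that ce by (simp add: k_def h0 norm_divide divide_le_eq mult.commute)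
    ultimately show ?thesis by (simp add: L_def)
  qed
  show "norm (deriv h 0) \<le> c"
    by (rule field_le_epsilon) (use eps[of _ 0] in auto)
  show "norm (h z) \<le> c * norm z" if z: "z \<in> ball 0 1"
  proof (rule field_le_epsilon)
    fix e :: real assume "0 < e"
    have "norm (h z) \<le> c * norm z + e * norm z"
      using eps[OF \<open>0 < e\<close> z] by (simp add: distrib_right)
    also have "\<dots> \<le> c * norm z + e"
      using z \<open>0 < e\<close> by (simp add: mult_left_le)
    finally show "norm (h z) \<le> c * norm z + e" .
  qed
qed

lemma Schwarz_Lemma_order2:
  assumes hol: "h holomorphic_on ball 0 1" and h0: "h 0 = 0" and dh0: "deriv h 0 = 0"
    and bound: "\<And>z. z \<in> ball 0 1 \<Longrightarrow> norm (h z) \<le> c"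
  shows "z \<in> ball 0 1 \<Longrightarrow> norm (h z) \<le> c * (norm z)^2"
    and "norm (deriv (deriv h) 0) \<le> 2 * c"
proof -
  have c0: "0 \<le> c" using bound[of 0] h0 by simp
  have holk: "zdiv h holomorphic_on ball 0 1"
    by (rule holomorphic_zdiv[OF hol _ h0]) simp
  have k0: "zdiv h 0 = 0" by (simp add: zdiv_0 dh0)
  have bound_zdiv: "norm (zdiv h z) \<le> c" if "z \<in> ball 0 1" for z
    using Schwarz_Lemma_le(1)[OF hol h0 bound that] c0
    by (cases "z = 0") (auto simp: zdiv_def dh0 norm_divide field_simps)
  note S = Schwarz_Lemma_le[OF holk k0, of c]
  show "norm (h z) \<le> c * (norm z)^2" if "z \<in> ball 0 1"
  proof -
    have "norm (h z) = norm z * norm (zdiv h z)"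
      by (simp add: mult_zdiv[of h, OF h0, symmetric] norm_mult)
    also have "\<dots> \<le> norm z * (c * norm z)"
      using S(1) bound_zdiv that by (simp add: mult_left_mono)
    finally show ?thesis by (simp add: power2_eq_square ac_simps)
  qed
  show "norm (deriv (deriv h) 0) \<le> 2 * c"
    using deriv_deriv_eq_zdiv[OF hol _ _ h0] S(2) bound_zdiv by (simp add: norm_mult)
qed

lemma deriv_linear_on_ball:
  assumes lin: "\<forall>z. norm z < 1 \<longrightarrow> w z = a * z"
  shows "deriv w 0 = a" and "deriv (deriv w) 0 = 0"
proof -
  have dw: "deriv w z = a" if "z \<in> ball 0 1" for z
  proof -
    have "deriv w z = deriv (\<lambda>u. a * u) z"
      by (rule deriv_cong_open[OF open_ball that]) (use lin in simp)
    then show ?thesis by simp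
  qed
  then show "deriv w 0 = a" by simp
  have "deriv (deriv w) 0 = deriv (\<lambda>_. a) 0"
    by (rule deriv_cong_open[of "ball 0 1"]) (simp_all add: dw)
  then show "deriv (deriv w) 0 = 0" by simp
qed

lemma norm_zdiv_Schwarz_less:
  assumes holw: "w holomorphic_on ball 0 1" and w0: "w 0 = 0"
    and wB: "\<And>z. norm z < 1 \<Longrightarrow> norm (w z) < 1"
    and dw0: "norm (deriv w 0) < 1" and z: "norm z < 1"
  shows "norm (zdiv w z) < 1"
proof (cases "z = 0")
  case False
  note S = Schwarz_Lemma[OF holw w0 wB]
  have le: "norm (zdiv w z) \<le> 1"
    using S(1)[of z] z False by (simp add: zdiv_def norm_divide)
  have "norm (zdiv w z) \<noteq> 1"
  proof
    assume "norm (zdiv w z) = 1"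
    then have "norm (w z) = norm z"
      using False by (simp add: zdiv_def norm_divide)
    then obtain a where lin: "\<forall>z. norm z < 1 \<longrightarrow> w z = a * z" and "norm a = 1"
      using S(3) z False by blast
    then show False
      using deriv_linear_on_ball(1)[OF lin] dw0 by simp
  qed
  with le show ?thesis by simp
qed (use dw0 in \<open>simp add: zdiv_0\<close>)

lemma Schwarz_Pick_deriv_0:
  assumes hol: "\<psi> holomorphic_on ball 0 1" and B: "\<And>z. norm z < 1 \<Longrightarrow> norm (\<psi> z) < 1"
  shows "norm (deriv \<psi> 0) \<le> 1 - (norm (\<psi> 0))^2"
proof -
  define c where "c = \<psi> 0"
  define \<phi> where "\<phi> = Moebius_function 0 c \<circ> \<psi>"
  have c: "norm c < 1"
    using B[of 0] by (simp add: c_def)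
  have hol\<phi>: "\<phi> holomorphic_on ball 0 1"
    unfolding \<phi>_def
    by (rule holomorphic_on_compose[OF hol holomorphic_on_subset[OF Moebius_function_holomorphic[OF c]]])
      (use B in auto)
  have \<phi>0: "\<phi> 0 = 0"
    by (simp add: \<phi>_def c_def Moebius_function_eq_zero)
  have \<phi>B: "norm (\<phi> z) < 1" if "norm z < 1" for z
    unfolding \<phi>_def using Moebius_function_norm_lt_1[OF c B[OF that]] by simp
  have "1 - cnj c * c = of_real (1 - (norm c)^2)"
    by (simp add: complex_norm_square mult.commute del: of_real_power)
  then have den: "norm (1 - cnj c * c) = 1 - (norm c)^2"
    using c by (simp add: abs_square_le_1 del: of_real_diff)
  have "(norm c)^2 < 1"
    using c by (simp add: abs_square_less_1)
  with den have "1 - cnj c * c \<noteq> 0"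
    by auto
  have "(\<psi> has_field_derivative deriv \<psi> 0) (at 0)"
    by (rule holomorphic_derivI[OF hol]) auto
  then have "(\<phi> has_field_derivative deriv \<psi> 0 / (1 - cnj c * c)) (at 0)"
    unfolding \<phi>_def o_def Moebius_function_simple using \<open>1 - cnj c * c \<noteq> 0\<close>
    by (auto intro!: derivative_eq_intros simp: c_def[symmetric] power2_eq_square)
  then have "norm (deriv \<psi> 0 / (1 - cnj c * c)) \<le> 1"
    using Schwarz_Lemma(2)[OF hol\<phi> \<phi>0 \<phi>B, of 0] by (simp add: DERIV_imp_deriv)
  with den \<open>(norm c)^2 < 1\<close> show ?thesis
    by (simp add: norm_divide divide_le_eq c_def)
qed

lemma Schwarz_second_deriv:
  assumes holw: "w holomorphic_on ball 0 1" and w0: "w 0 = 0"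
    and wB: "\<And>z. norm z < 1 \<Longrightarrow> norm (w z) < 1"
  shows "norm (deriv (deriv w) 0) \<le> 2 * (1 - (norm (deriv w 0))^2)"
proof -
  note S = Schwarz_Lemma[OF holw w0 wB]
  have "norm (deriv w 0) \<le> 1" using S(2)[of 0] by simp
  then consider "norm (deriv w 0) = 1" | "norm (deriv w 0) < 1" by linarith
  then show ?thesis
  proof cases
    case 1
    then obtain a where "\<forall>z. norm z < 1 \<longrightarrow> w z = a * z"
      using S(3) by auto
    then have "deriv (deriv w) 0 = 0" by (rule deriv_linear_on_ball(2))
    then show ?thesis using 1 by simp
  next
    case 2
    have "zdiv w holomorphic_on ball 0 1"
      by (rule holomorphic_zdiv[OF holw _ w0]) simp
    moreover have "norm (zdiv w z) < 1" if "norm z < 1" for z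
      by (rule norm_zdiv_Schwarz_less[OF holw w0 wB 2 that])
    ultimately have "norm (deriv (zdiv w) 0) \<le> 1 - (norm (deriv w 0))^2"
      using Schwarz_Pick_deriv_0[of "zdiv w"] by (simp add: zdiv_0)
    then show ?thesis
      using deriv_deriv_eq_zdiv[OF holw _ _ w0] by (simp add: norm_mult)
  qed
qed

section \<open>The real extremal problem\<close>

definition det31_bound :: "real \<Rightarrow> real" where
  "det31_bound l = l^2 * (1 + l) * (3 + l)"

lemma strict_mono_on_det31_bound: "strict_mono_on {0..} det31_bound"
proof (rule strict_mono_onI)
  fix a b :: real assume "a \<in> {0..}" "b \<in> {0..}" "a < b"
  then have sq: "a^2 < b^2"
    by (intro power_strict_mono) auto
  with \<open>a \<in> {0..}\<close> \<open>a < b\<close> have "a^2 * (1 + a) < b^2 * (1 + b)"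
    by (intro mult_strict_mono) auto
  with \<open>a \<in> {0..}\<close> \<open>a < b\<close> show "det31_bound a < det31_bound b"
    unfolding det31_bound_def by (intro mult_strict_mono) (use sq in auto)
qed

lemma lambda0_root: "0 < lambda0" "det31_bound lambda0 = 1"
proof -
  have "continuous_on {0..1} det31_bound"
    unfolding det31_bound_def by (intro continuous_intros)
  then obtain l where l: "0 \<le> l" "det31_bound l = 1"
    using IVT'[of det31_bound 0 1 1] by (auto simp: det31_bound_def)
  have "0 < l"
    using l by (cases "l = 0") (auto simp: det31_bound_def)
  have "lambda0 = l"
    unfolding lambda0_def
  proof (rule the_equality)
    show "0 < l \<and> l^2 * (1 + l) * (3 + l) - 1 = 0"
      using \<open>0 < l\<close> l by (simp add: det31_bound_def)
    show "m = l" if "0 < m \<and> m^2 * (1 + m) * (3 + m) - 1 = 0" for m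
      using strict_mono_on_eqD[OF strict_mono_on_det31_bound, of l m] that l
      by (simp add: det31_bound_def)
  qed
  with \<open>0 < l\<close> l show "0 < lambda0" "det31_bound lambda0 = 1" by auto
qed

lemma le_lambda0_iff: "0 \<le> l \<Longrightarrow> l \<le> lambda0 \<longleftrightarrow> det31_bound l \<le> 1"
  using strict_mono_on_less_eq[OF strict_mono_on_det31_bound, of l lambda0] lambda0_root by simp

lemma det31_real_bound_middle:
  fixes l s :: real
  assumes l: "0 < l" and s: "1 \<le> (1 + l)^2 * s" "(1 + 2*l) * s \<le> 1 + l"
  shows "((1 + l)^2 * s - 1)^2 \<le> det31_bound l"
proof -
  have "(1 + 2*l) * ((1 + l)^2 * s - 1) = (1 + l)^2 * ((1 + 2*l) * s) - (1 + 2*l)"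
    by (simp add: algebra_simps)
  also have "\<dots> \<le> (1 + l)^2 * (1 + l) - (1 + 2*l)"
    using s by (simp add: mult_left_mono)
  also have "\<dots> = l * (1 + 3*l + l^2)"
    by (simp add: power2_eq_square algebra_simps)
  finally have "((1 + 2*l) * ((1 + l)^2 * s - 1))^2 \<le> (l * (1 + 3*l + l^2))^2"
    using s l by (intro power_mono) auto
  also have "\<dots> \<le> (1 + 2*l)^2 * det31_bound l"
  proof -
    have "(1 + 2*l)^2 * det31_bound l - (l * (1 + 3*l + l^2))^2
        = l^2 * (2 + 10*l + 18*l^2 + 14*l^3 + 3*l^4)"
      by (simp add: det31_bound_def power2_eq_square power3_eq_cube power4_eq_xxxx algebra_simps)
    also have "0 \<le> \<dots>" using l by simp
    finally show ?thesis by simp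
  qed
  finally show ?thesis
    using l by (simp add: power_mult_distrib mult_le_cancel_left)
qed

lemma det31_real_bound_outer:
  fixes l s :: real
  assumes l: "0 < l" and s: "0 \<le> s" "s \<le> 1"
  shows "((1 + l)^2 * s - 1)^2 - ((1 + 2*l) * s - (1 + l))^2 \<le> det31_bound l"
proof -
  define t where "t = (2 + 4*l + l^2) * s - 2 - l"
  have "((1 + l)^2 * s - 1)^2 - ((1 + 2*l) * s - (1 + l))^2 = (l^2 * s + l) * t"
    by (simp add: t_def power2_eq_square algebra_simps)
  also have "\<dots> \<le> (l^2 + l) * (l^2 + 3*l)"
  proof (cases "t \<le> 0")
    case True
    then show ?thesis
      using l s by (intro order.trans[OF mult_nonneg_nonpos[of _ t]]) auto
  next
    case False
    have "t \<le> l^2 + 3*l"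
      using s l mult_left_le[of s "2 + 4*l + l^2"] by (simp add: t_def)
    then show ?thesis
      using False l s by (intro mult_mono) (auto simp: mult_left_le)
  qed
  also have "\<dots> = det31_bound l"
    by (simp add: det31_bound_def power2_eq_square algebra_simps)
  finally show ?thesis .
qed

(* The upper bound for detT31 in terms of s = |c_1|^2 and m = |a_3 - a_2^2|. *)
lemma det31_real_bound:
  fixes l s m :: real
  assumes l: "0 < l" and s: "0 \<le> s" "s \<le> 1"
    and m: "0 \<le> m" "(1 + 2*l) * s - (1 + l) \<le> m"
  shows "(1 - (1 + l)^2 * s)^2 - m^2 \<le> max 1 (det31_bound l)"
proof -
  have sq: "(1 - (1 + l)^2 * s)^2 = ((1 + l)^2 * s - 1)^2"
    by (simp add: power2_commute)
  consider "(1 + l)^2 * s \<le> 1" | "1 \<le> (1 + l)^2 * s" "(1 + 2*l) * s \<le> 1 + l"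
    | "1 + l \<le> (1 + 2*l) * s" by linarith
  then show ?thesis
  proof cases
    case 1
    then have "(1 - (1 + l)^2 * s)^2 \<le> 1"
      using s by (intro power_le_one) auto
    then show ?thesis
      using zero_le_power2[of m] max.cobounded1[of 1 "det31_bound l"] by linarith
  next
    case 2
    then show ?thesis
      using det31_real_bound_middle[OF l 2] sq zero_le_power2[of m]
        max.cobounded2[of "det31_bound l" 1] by linarith
  next
    case 3
    then have "((1 + 2*l) * s - (1 + l))^2 \<le> m^2"
      using m by (intro power_mono) auto
    then show ?thesis
      using det31_real_bound_outer[OF l s] sq max.cobounded2[of "det31_bound l" 1] by linarith
  qed
qed

section \<open>The class U(lambda)\<close>

lemma toeplitz_det3_eq:
  fixes a b :: complex
  shows "2 * Re (a^2 * cnj b) - 2 * (norm a)^2 - (norm b)^2 + 1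
       = (1 - (norm a)^2)^2 - (norm (b - a^2))^2"
  unfolding cmod_power2 by (simp add: power2_eq_square algebra_simps)

lemma detT31_eq: "detT31 f = (1 - (norm (coeff f 2))^2)^2 - (norm (coeff f 3 - (coeff f 2)^2))^2"
  unfolding detT31_def by (rule toeplitz_det3_eq)

lemma nonvanishing_imp_norm_linear_coeff_le:
  fixes g :: "complex \<Rightarrow> complex"
  assumes cont: "continuous_on (ball 0 1) g" and nz: "\<And>z. z \<in> ball 0 1 \<Longrightarrow> g z \<noteq> 0"
    and c: "0 \<le> c" and approx: "\<And>z. z \<in> ball 0 1 \<Longrightarrow> norm (g z - 1 + b * z) \<le> c * (norm z)^2"
  shows "norm b \<le> 1 + c"
proof (rule ccontr)
  assume "\<not> norm b \<le> 1 + c"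
  then have big: "1 + c < norm b" by simp
  then have b0: "b \<noteq> 0" using c by auto
  define r where "r = (1 + c) / norm b"
  have r: "0 < r" "r < 1"
    using big c by (auto simp: r_def divide_less_eq intro!: divide_pos_pos)
  let ?C = "cball (0::complex) r"
  have CB: "?C \<subseteq> ball 0 1" using r by auto
  (* Brouwer: z + g z / b maps the disc of radius r into itself; a fixed point is a zero of g. *)
  obtain z where z: "z \<in> ?C" "z + g z / b = z"
  proof (rule brouwer[of ?C "\<lambda>z. z + g z / b"])
    show "continuous_on ?C (\<lambda>z. z + g z / b)"
      by (intro continuous_intros continuous_on_subset[OF cont CB]) (use b0 in auto)
    show "(\<lambda>z. z + g z / b) \<in> ?C \<rightarrow> ?C"
    proof
      fix z assume z: "z \<in> ?C"
      have "norm (b * z + g z) \<le> 1 + norm (g z - 1 + b * z)"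
        using norm_triangle_ineq[of 1 "g z - 1 + b * z"] by (simp add: algebra_simps)
      also have "\<dots> \<le> 1 + c * (norm z)^2"
        using approx z CB by auto
      also have "\<dots> \<le> 1 + c"
        using z r c by (auto intro!: mult_left_le power_le_one)
      also have "\<dots> = norm b * r"
        using b0 by (simp add: r_def)
      finally show "z + g z / b \<in> ?C"
        using b0 by (simp add: norm_divide field_simps)
    qed
  qed (use r in auto)
  then show False
    using nz[of z] CB b0 by auto
qed

(* For g = z / f this is (z / f z)^2 f' z - 1, the quantity bounded in the definition of U(lam). *)
definition U_defect :: "(complex \<Rightarrow> complex) \<Rightarrow> complex \<Rightarrow> complex" where
  "U_defect g z = g z - z * deriv g z - 1"

lemma U_defect_Schwarz:
  assumes holg: "g holomorphic_on ball 0 1" and g0: "g 0 = 1"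
    and bound: "\<And>z. z \<in> ball 0 1 \<Longrightarrow> norm (U_defect g z) \<le> c"
  shows "z \<in> ball 0 1 \<Longrightarrow> norm (U_defect g z) \<le> c * (norm z)^2"
    and "norm (deriv (deriv g) 0) \<le> 2 * c"
proof -
  let ?B = "ball (0::complex) 1"
  have holdg: "deriv g holomorphic_on ?B"
    by (rule holomorphic_deriv[OF holg]) auto
  have holddg: "deriv (deriv g) holomorphic_on ?B"
    by (rule holomorphic_deriv[OF holdg]) auto
  have holW: "U_defect g holomorphic_on ?B"
    unfolding U_defect_def[abs_def] by (intro holomorphic_intros holg holdg)
  have dW: "(U_defect g has_field_derivative - z * deriv (deriv g) z) (at z)" if "z \<in> ?B" for z
    unfolding U_defect_def[abs_def]
    using holomorphic_derivI[OF holg _ that] holomorphic_derivI[OF holdg _ that]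
    by (auto intro!: derivative_eq_intros)
  have W0: "U_defect g 0 = 0" and dW0: "deriv (U_defect g) 0 = 0"
    using g0 DERIV_imp_deriv[OF dW[of 0]] by (auto simp: U_defect_def)
  have "deriv (deriv (U_defect g)) 0 = deriv (\<lambda>z. - z * deriv (deriv g) z) 0"
    by (rule deriv_cong_open[of ?B]) (simp_all add: DERIV_imp_deriv[OF dW])
  also have "\<dots> = - deriv (deriv g) 0"
    using holomorphic_derivI[OF holddg, of 0]
    by (intro DERIV_imp_deriv) (auto intro!: derivative_eq_intros)
  finally have ddW0: "deriv (deriv (U_defect g)) 0 = - deriv (deriv g) 0" .
  note S = Schwarz_Lemma_order2[OF holW W0 dW0 bound]
  show "norm (U_defect g z) \<le> c * (norm z)^2" if "z \<in> ?B"
    using S(1) that by simp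
  show "norm (deriv (deriv g) 0) \<le> 2 * c"
    using S(2) ddW0 by simp
qed

lemma norm_le_of_deriv_zdiv_le:
  assumes hol: "h holomorphic_on ball 0 1" and h0: "h 0 = 0" and dh0: "deriv h 0 = 0"
    and bound: "\<And>w. w \<in> ball 0 1 \<Longrightarrow> norm (deriv (zdiv h) w) \<le> c"
    and z: "z \<in> ball 0 1"
  shows "norm (h z) \<le> c * (norm z)^2"
proof -
  have holQ: "zdiv h holomorphic_on ball 0 1"
    by (rule holomorphic_zdiv[OF hol _ h0]) simp
  have "norm (zdiv h z - zdiv h 0) \<le> c * norm (z - 0)"
  proof (rule field_differentiable_bound[OF convex_ball[of 0 1] _ bound])
    show "(zdiv h has_field_derivative deriv (zdiv h) w) (at w within ball 0 1)"
      if "w \<in> ball 0 1" for w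
      using holomorphic_derivI[OF holQ _ that] by (auto intro: has_field_derivative_at_within)
  qed (use z in auto)
  then have "norm z * norm (zdiv h z) \<le> norm z * (c * norm z)"
    using dh0 by (intro mult_left_mono) (auto simp: zdiv_0)
  moreover have "norm (h z) = norm z * norm (zdiv h z)"
    unfolding mult_zdiv[of h z, OF h0, symmetric] by (simp add: norm_mult)
  ultimately show ?thesis
    by (simp add: power2_eq_square ac_simps)
qed

lemma U_defect_taylor_bound:
  assumes holg: "g holomorphic_on ball 0 1" and g0: "g 0 = 1"
    and dd: "norm (deriv (deriv g) 0) \<le> 2 * c"
    and W: "\<And>z. z \<in> ball 0 1 \<Longrightarrow> norm (U_defect g z) \<le> c * (norm z)^2"
    and z: "z \<in> ball 0 1"
  shows "norm (g z - 1 - deriv g 0 * z) \<le> c * (norm z)^2"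
proof -
  let ?B = "ball (0::complex) 1"
  define u where "u = (\<lambda>z. g z - 1 - deriv g 0 * z)"
  have holdg: "deriv g holomorphic_on ?B"
    by (rule holomorphic_deriv[OF holg]) auto
  have du: "(u has_field_derivative deriv g z - deriv g 0) (at z)" if "z \<in> ?B" for z
    unfolding u_def using holomorphic_derivI[OF holg _ that]
    by (auto intro!: derivative_eq_intros)
  have holu: "u holomorphic_on ?B"
    unfolding u_def by (intro holomorphic_intros holg)
  have u0: "u 0 = 0" and du0: "deriv u 0 = 0"
    using g0 DERIV_imp_deriv[OF du[of 0]] by (auto simp: u_def)
  have "norm (deriv (zdiv u) w) \<le> c" if w: "w \<in> ?B" for w
  proof (cases "w = 0")
    case True
    have "deriv (deriv u) 0 = deriv (\<lambda>z. deriv g z - deriv g 0) 0"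
      by (rule deriv_cong_open[of ?B]) (simp_all add: DERIV_imp_deriv[OF du])
    also have "\<dots> = deriv (deriv g) 0"
      using holomorphic_derivI[OF holdg, of 0] by (intro DERIV_imp_deriv) (auto intro!: derivative_eq_intros)
    finally have "deriv (deriv g) 0 = 2 * deriv (zdiv u) 0"
      using deriv_deriv_eq_zdiv[OF holu _ _ u0] by simp
    then show ?thesis
      using dd True by (simp add: norm_mult)
  next
    case False
    have "deriv (zdiv u) w = deriv (\<lambda>z. u z / z) w"
      by (rule deriv_cong_open[of "- {0}"]) (use False in \<open>auto simp: zdiv_def\<close>)
    also have "\<dots> = ((deriv g w - deriv g 0) * w - u w) / w^2"
      using du[OF w] False
      by (intro DERIV_imp_deriv) (auto intro!: derivative_eq_intros simp: field_simps power2_eq_square)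
    also have "\<dots> = - U_defect g w / w^2"
      by (simp add: u_def U_defect_def algebra_simps)
    finally have "norm (deriv (zdiv u) w) = norm (U_defect g w) / (norm w)^2"
      by (simp add: norm_divide norm_power)
    then show ?thesis
      using W[OF w] False by (simp add: divide_le_eq)
  qed
  from norm_le_of_deriv_zdiv_le[OF holu u0 du0 this z] show ?thesis
    by (simp add: u_def)
qed

lemma classA_zdiv:
  assumes "f \<in> classA"
  shows "zdiv f holomorphic_on ball 0 1" and "zdiv f 0 = 1" and "z * zdiv f z = f z"
    and "coeff f 2 = deriv (zdiv f) 0" and "coeff f 3 = deriv (deriv (zdiv f)) 0 / 2"
    and "(\<lambda>z. if z = 0 then 1 else f z / z) = zdiv f"
proof -
  from assms have hol: "f holomorphic_on ball 0 1" and f0: "f 0 = 0" and df0: "deriv f 0 = 1"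
    by (auto simp: classA_def)
  show holF: "zdiv f holomorphic_on ball 0 1"
    by (rule holomorphic_zdiv[OF hol _ f0]) simp
  show "zdiv f 0 = 1" and "z * zdiv f z = f z"
    by (simp_all add: zdiv_0 df0 mult_zdiv[of f, OF f0])
  show "(\<lambda>z. if z = 0 then 1 else f z / z) = zdiv f"
    by (auto simp: zdiv_def df0)
  have f: "f = (\<lambda>z. z * zdiv f z)"
    by (simp add: mult_zdiv[of f, OF f0])
  show "coeff f 2 = deriv (zdiv f) 0"
    using coeff_zmult[OF holF open_ball, of 1] by (simp add: f[symmetric] numeral_2_eq_2 coeff_def)
  show "coeff f 3 = deriv (deriv (zdiv f)) 0 / 2"
    using coeff_zmult[OF holF open_ball, of 2] by (simp add: f[symmetric] numeral_3_eq_3 numeral_2_eq_2 coeff_def)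
qed

lemma classU_zdiv_nonzero:
  assumes f: "f \<in> classU lam" and lam: "lam \<le> 1" and z: "z \<in> ball 0 1"
  shows "zdiv f z \<noteq> 0"
proof (cases "z = 0")
  case False
  (* Since z / 0 = 0, a zero of f would make the quantity bounded by lam equal to -1. *)
  have "norm ((z / f z)^2 * deriv f z - 1) < lam"
    using f z False by (simp add: classU_def)
  with lam have "f z \<noteq> 0" by auto
  with False show ?thesis by (simp add: zdiv_def)
qed (use f in \<open>simp add: zdiv_0 classU_def classA_def\<close>)

definition z_over :: "(complex \<Rightarrow> complex) \<Rightarrow> complex \<Rightarrow> complex" where
  "z_over f z = 1 / zdiv f z"

lemma classA_z_over:
  assumes fA: "f \<in> classA" and nz: "\<And>z. z \<in> ball 0 1 \<Longrightarrow> zdiv f z \<noteq> 0"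
  shows "z_over f holomorphic_on ball 0 1" and "z_over f 0 = 1"
    and "\<And>z. z \<in> ball 0 1 \<Longrightarrow> deriv (z_over f) z = - deriv (zdiv f) z / (zdiv f z)^2"
    and "deriv (z_over f) 0 = - coeff f 2"
    and "deriv (deriv (z_over f)) 0 = 2 * ((coeff f 2)^2 - coeff f 3)"
proof -
  let ?B = "ball (0::complex) 1"
  let ?F = "zdiv f"
  note F = classA_zdiv[OF fA]
  have g: "z_over f = (\<lambda>z. 1 / ?F z)"
    by (simp add: z_over_def[abs_def])
  have dF: "(?F has_field_derivative deriv ?F z) (at z)" if "z \<in> ?B" for z
    by (rule holomorphic_derivI[OF F(1) _ that]) auto
  have ddF: "(deriv ?F has_field_derivative deriv (deriv ?F) 0) (at 0)"
    by (rule holomorphic_derivI[OF holomorphic_deriv[OF F(1)]]) auto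
  show "z_over f holomorphic_on ?B"
    unfolding g by (intro holomorphic_intros F(1)) (use nz in auto)
  show "z_over f 0 = 1"
    unfolding z_over_def F(2) by simp
  show dg: "deriv (z_over f) z = - deriv ?F z / (?F z)^2" if "z \<in> ?B" for z
    unfolding g using dF[OF that] nz[OF that]
    by (intro DERIV_imp_deriv) (auto intro!: derivative_eq_intros simp: field_simps power2_eq_square)
  show "deriv (z_over f) 0 = - coeff f 2"
    using dg[of 0] by (simp add: F(2) F(4))
  have "deriv (deriv (z_over f)) 0 = deriv (\<lambda>z. - deriv ?F z / (?F z)^2) 0"
    by (rule deriv_cong_open[of ?B]) (simp_all add: dg)
  also have "\<dots> = - deriv (deriv ?F) 0 + 2 * (deriv ?F 0)^2"
    using dF[of 0] ddF by (intro DERIV_imp_deriv)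
      (auto intro!: derivative_eq_intros simp: F(2) field_simps power2_eq_square)
  finally show "deriv (deriv (z_over f)) 0 = 2 * ((coeff f 2)^2 - coeff f 3)"
    by (simp add: F(4) F(5) algebra_simps)
qed

lemma U_defect_z_over:
  assumes fA: "f \<in> classA" and nz: "\<And>z. z \<in> ball 0 1 \<Longrightarrow> zdiv f z \<noteq> 0"
    and z: "z \<in> ball 0 1" "z \<noteq> 0"
  shows "U_defect (z_over f) z = (z / f z)^2 * deriv f z - 1"
proof -
  let ?F = "zdiv f"
  note F = classA_zdiv[OF fA]
  have "((\<lambda>z. z * ?F z) has_field_derivative ?F z + z * deriv ?F z) (at z)"
    using holomorphic_derivI[OF F(1) _ z(1)] by (auto intro!: derivative_eq_intros)
  then have "(f has_field_derivative ?F z + z * deriv ?F z) (at z)"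
    by (simp add: F(3))
  then have df: "deriv f z = ?F z + z * deriv ?F z"
    by (rule DERIV_imp_deriv)
  have "deriv (z_over f) z = - deriv ?F z / (?F z)^2"
    using classA_z_over(3)[of f z] fA nz z(1) by blast
  then have "U_defect (z_over f) z = 1 / ?F z + z * deriv ?F z / (?F z)^2 - 1"
    by (simp add: U_defect_def z_over_def)
  also have "\<dots> = (z / f z)^2 * deriv f z - 1"
    using nz[OF z(1)] z(2) by (simp add: df F(3)[of z, symmetric] field_simps power2_eq_square)
  finally show ?thesis .
qed

lemma classU_U_defect_le:
  assumes f: "f \<in> classU lam" and lam: "lam \<le> 1" and z: "z \<in> ball 0 1"
  shows "norm (U_defect (z_over f) z) \<le> lam"
proof -
  have fA: "f \<in> classA"
    using f by (simp add: classU_def)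
  have cond: "norm ((z / f z)^2 * deriv f z - 1) < lam" if "z \<in> ball 0 1" "z \<noteq> 0" for z
    using f that by (simp add: classU_def)
  show ?thesis
  proof (cases "z = 0")
    case True
    have "0 < lam"
      using order_le_less_trans[OF norm_ge_zero cond[of "1/2"]] by simp
    then show ?thesis
      using True classA_z_over(2)[OF fA classU_zdiv_nonzero[OF f lam]] by (simp add: U_defect_def)
  next
    case False
    then show ?thesis
      using U_defect_z_over[OF fA classU_zdiv_nonzero[OF f lam] z False] cond[OF z False] by simp
  qed
qed

lemma classU_coeff_bounds:
  assumes f: "f \<in> classU lam" and lam: "lam \<le> 1"
  shows "norm (coeff f 3 - (coeff f 2)^2) \<le> lam" and "norm (coeff f 2) \<le> 1 + lam"
proof -
  let ?g = "z_over f"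
  have fA: "f \<in> classA"
    using f by (simp add: classU_def)
  note G = classA_z_over[OF fA classU_zdiv_nonzero[OF f lam]]
  have W_le: "norm (U_defect ?g z) \<le> lam" if "z \<in> ball 0 1" for z
    by (rule classU_U_defect_le[OF f lam that])
  note W = U_defect_Schwarz[OF G(1) G(2) W_le]
  have dd: "deriv (deriv ?g) 0 = - (2 * (coeff f 3 - (coeff f 2)^2))"
    using G(5) by (simp add: algebra_simps)
  have "norm (deriv (deriv ?g) 0) = 2 * norm (coeff f 3 - (coeff f 2)^2)"
    unfolding dd norm_minus_cancel norm_mult by simp
  then show "norm (coeff f 3 - (coeff f 2)^2) \<le> lam"
    using W(2) by simp
  have taylor: "norm (?g z - 1 + coeff f 2 * z) \<le> lam * (norm z)^2" if "z \<in> ball 0 1" for z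
    using U_defect_taylor_bound[OF G(1) G(2) W(2) W(1) that] G(4) by simp
  have "?g z \<noteq> 0" if "z \<in> ball 0 1" for z
    using classU_zdiv_nonzero[OF f lam that] by (simp add: z_over_def)
  moreover have "0 \<le> lam"
    using order_trans[OF norm_ge_zero W_le[of 0]] by simp
  ultimately show "norm (coeff f 2) \<le> 1 + lam"
    by (intro nonvanishing_imp_norm_linear_coeff_le[OF holomorphic_on_imp_continuous_on[OF G(1)]])
      (simp_all add: taylor)
qed

lemma classU_detT21_bounds:
  assumes "f \<in> classU lam" "lam \<le> 1"
  shows "- lam * (2 + lam) \<le> detT21 f" and "detT21 f \<le> 1"
proof -
  have "0 \<le> 1 + lam"
    using classU_coeff_bounds(2)[OF assms] norm_ge_zero order_trans by blast
  then have "(norm (coeff f 2))^2 \<le> (1 + lam)^2"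
    using classU_coeff_bounds(2)[OF assms] by (intro power_mono) auto
  then show "- lam * (2 + lam) \<le> detT21 f"
    by (simp add: detT21_def power2_eq_square algebra_simps)
  show "detT21 f \<le> 1"
    by (simp add: detT21_def)
qed

lemma classU_detT31_lower:
  assumes "f \<in> classU lam" "lam \<le> 1"
  shows "- (lam^2) \<le> detT31 f"
proof -
  have "(norm (coeff f 3 - (coeff f 2)^2))^2 \<le> lam^2"
    using classU_coeff_bounds(1)[OF assms] by (intro power_mono) auto
  then show ?thesis
    unfolding detT31_eq by (smt (verit) zero_le_power2)
qed

section \<open>The class U_s(lambda)\<close>

lemma classUs_subset_classU: "classUs lam \<subseteq> classU lam"
  by (auto simp: classUs_def)

lemma one_plus_mult_nonzero:
  fixes a z :: complex
  assumes "norm a \<le> 1" "norm z < 1"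
  shows "1 + a * z \<noteq> 0"
proof
  assume "1 + a * z = 0"
  then have "norm (a * z) = 1"
    by (metis add.inverse_unique norm_minus_cancel norm_one)
  moreover have "norm a * norm z \<le> norm z"
    using assms by (intro mult_left_le_one_le) auto
  with assms have "norm (a * z) < 1"
    by (simp add: norm_mult)
  ultimately show False by simp
qed

lemma norm_one_plus_of_real: "0 \<le> lam \<Longrightarrow> norm (1 + complex_of_real lam) = 1 + lam"
  by (metis abs_of_nonneg add_nonneg_nonneg norm_of_real of_real_1 of_real_add zero_le_one)

lemma classUs_coeffs:
  assumes f: "f \<in> classUs lam" and lam: "\<bar>lam\<bar> \<le> 1"
  obtains c\<^sub>1 c\<^sub>2 where "norm c\<^sub>1 \<le> 1" and "norm c\<^sub>2 \<le> 1 - (norm c\<^sub>1)^2"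
    and "coeff f 2 = - (1 + of_real lam) * c\<^sub>1"
    and "coeff f 3 = (1 + of_real lam + (of_real lam)^2) * c\<^sub>1^2 - (1 + of_real lam) * c\<^sub>2"
proof -
  let ?B = "ball (0::complex) 1"
  let ?l = "complex_of_real lam"
  define h where "h = (\<lambda>z. 1 / ((1 + z) * (1 + ?l * z)))"
  have fA: "f \<in> classA"
    using f by (simp add: classUs_def classU_def)
  note F = classA_zdiv[OF fA]
  have "subordinate (zdiv f) h"
    using f F(6) by (simp add: classUs_def h_def)
  then obtain w where holw: "w holomorphic_on ?B" and wB: "w ` ?B \<subseteq> ?B" and w0: "w 0 = 0"
    and Fw: "\<And>z. z \<in> ?B \<Longrightarrow> zdiv f z = h (w z)"
    unfolding subordinate_def by blast
  have "(1 + z) * (1 + ?l * z) \<noteq> 0" if "z \<in> ?B" for z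
    using one_plus_mult_nonzero[of 1 z] one_plus_mult_nonzero[of ?l z] that lam by auto
  then have holh: "h holomorphic_on ?B"
    unfolding h_def by (intro holomorphic_intros) auto
  have "h = (\<lambda>z. 1 / (1 + (1 + ?l) * z + ?l * z^2))"
    by (auto simp: h_def power2_eq_square algebra_simps)
  note dh = deriv_inverse_quadratic[of "1 + ?l" ?l, folded this]
  have chain: "deriv (zdiv f) 0 = deriv h 0 * deriv w 0"
    "deriv (deriv (zdiv f)) 0 = deriv (deriv h) 0 * (deriv w 0)^2 + deriv h 0 * deriv (deriv w) 0"
    using deriv_compose_holomorphic[OF holh open_ball holw open_ball wB, of 0 "zdiv f"] Fw w0
    by simp_all
  have wB': "norm (w z) < 1" if "norm z < 1" for z
    using wB that by (auto simp: image_subset_iff)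
  show ?thesis
  proof
    show "norm (deriv w 0) \<le> 1"
      using Schwarz_Lemma(2)[OF holw w0 wB', of 0] by simp
    show "norm (deriv (deriv w) 0 / 2) \<le> 1 - (norm (deriv w 0))^2"
      using Schwarz_second_deriv[OF holw w0 wB'] by (simp add: norm_divide)
    show "coeff f 2 = - (1 + ?l) * deriv w 0"
      using chain(1) dh(1) F(4) by simp
    show "coeff f 3 = (1 + ?l + ?l^2) * (deriv w 0)^2 - (1 + ?l) * (deriv (deriv w) 0 / 2)"
      unfolding F(5) chain(2) dh by (simp add: power2_eq_square field_simps)
  qed
qed

lemma classUs_detT31_upper:
  assumes f: "f \<in> classUs lam" and lam: "0 < lam" "lam \<le> 1"
  shows "detT31 f \<le> max 1 (det31_bound lam)"
proof -
  let ?l = "complex_of_real lam"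
  obtain c\<^sub>1 c\<^sub>2 where c\<^sub>1: "norm c\<^sub>1 \<le> 1" and c\<^sub>2: "norm c\<^sub>2 \<le> 1 - (norm c\<^sub>1)^2"
    and a\<^sub>2: "coeff f 2 = - (1 + ?l) * c\<^sub>1"
    and a\<^sub>3: "coeff f 3 = (1 + ?l + ?l^2) * c\<^sub>1^2 - (1 + ?l) * c\<^sub>2"
    using classUs_coeffs[OF f] lam by auto
  define s where "s = (norm c\<^sub>1)^2"
  define m where "m = norm (coeff f 3 - (coeff f 2)^2)"
  have s: "0 \<le> s" "s \<le> 1"
    using c\<^sub>1 by (auto simp: s_def power_le_one)
  have n: "norm (1 + ?l) = 1 + lam"
    using lam by (simp add: norm_one_plus_of_real)
  have a\<^sub>2_sq: "(norm (coeff f 2))^2 = (1 + lam)^2 * s"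
    unfolding a\<^sub>2 s_def norm_mult norm_minus_cancel n by (simp add: power_mult_distrib)
  have "coeff f 3 - (coeff f 2)^2 = - (?l * c\<^sub>1^2 + (1 + ?l) * c\<^sub>2)"
    unfolding a\<^sub>2 a\<^sub>3 by (simp add: power2_eq_square algebra_simps)
  then have "m = norm (?l * c\<^sub>1^2 + (1 + ?l) * c\<^sub>2)"
    unfolding m_def by (simp only: norm_minus_cancel)
  then have "norm (?l * c\<^sub>1^2) - norm ((1 + ?l) * c\<^sub>2) \<le> m"
    using norm_diff_ineq by simp
  moreover have "norm (?l * c\<^sub>1^2) = lam * s"
    using lam by (simp add: norm_mult norm_power s_def)
  moreover have "norm ((1 + ?l) * c\<^sub>2) \<le> (1 + lam) * (1 - s)"
    unfolding norm_mult n s_def using c\<^sub>2 lam by (intro mult_left_mono) auto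
  ultimately have "(1 + 2 * lam) * s - (1 + lam) \<le> m"
    by (simp add: algebra_simps)
  moreover have "detT31 f = (1 - (1 + lam)^2 * s)^2 - m^2"
    unfolding detT31_eq a\<^sub>2_sq m_def ..
  ultimately show ?thesis
    using det31_real_bound[OF lam(1) s, of m] by (simp add: m_def)
qed

section \<open>Extremal functions\<close>

lemma U_expression_inverse_quadratic:
  fixes a z :: complex
  assumes nz: "1 + a * z + b * z^2 \<noteq> 0" and z: "z \<noteq> 0"
  defines "f \<equiv> \<lambda>z. z / (1 + a * z + b * z^2)"
  shows "(z / f z)^2 * deriv f z - 1 = - b * z^2"
proof -
  let ?p = "1 + a * z + b * z^2"
  have "(f has_field_derivative (?p - z * (a + 2 * b * z)) / ?p^2) (at z)"
    unfolding f_def using nz by (auto intro!: derivative_eq_intros simp: field_simps power2_eq_square)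
  then have df: "deriv f z = (?p - z * (a + 2 * b * z)) / ?p^2"
    by (rule DERIV_imp_deriv)
  have "z / f z = ?p"
    using nz z by (simp add: f_def)
  then have "(z / f z)^2 * deriv f z = ?p - z * (a + 2 * b * z)"
    unfolding df using nz by simp
  then show ?thesis
    by (simp add: power2_eq_square algebra_simps)
qed

lemma classU_inverse_quadratic:
  fixes a :: complex and lam :: real
  assumes lam: "0 < lam" and nz: "\<And>z. z \<in> ball 0 1 \<Longrightarrow> 1 + a * z + of_real lam * z^2 \<noteq> 0"
  defines "f \<equiv> \<lambda>z. z / (1 + a * z + of_real lam * z^2)"
  shows "f \<in> classU lam" and "zdiv f = (\<lambda>z. 1 / (1 + a * z + of_real lam * z^2))"
    and "coeff f 2 = - a" and "coeff f 3 = a^2 - of_real lam"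
proof -
  let ?B = "ball (0::complex) 1"
  let ?p = "\<lambda>z. 1 + a * z + of_real lam * z^2"
  define G where "G = (\<lambda>z. 1 / ?p z)"
  note dG = deriv_inverse_quadratic[of a "of_real lam", folded G_def]
  have holG: "G holomorphic_on ?B"
    unfolding G_def by (intro holomorphic_intros) (use nz in auto)
  have fG: "f = (\<lambda>z. z * G z)"
    by (simp add: f_def G_def fun_eq_iff)
  have df0: "deriv f 0 = 1"
    unfolding fG using holomorphic_derivI[OF holG, of 0]
    by (intro DERIV_imp_deriv) (auto intro!: derivative_eq_intros simp: G_def)
  show "zdiv f = (\<lambda>z. 1 / ?p z)"
    unfolding zdiv_def fun_eq_iff using df0 by (simp add: f_def)
  show "coeff f 2 = - a"
    using coeff_zmult[OF holG open_ball, of 1] dG(1)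
    by (simp add: fG[symmetric] numeral_2_eq_2 coeff_def)
  show "coeff f 3 = a^2 - of_real lam"
    using coeff_zmult[OF holG open_ball, of 2] dG(2)
    by (simp add: fG[symmetric] numeral_3_eq_3 numeral_2_eq_2 coeff_def)
  have "norm ((z / f z)^2 * deriv f z - 1) < lam" if z: "z \<in> ?B" "z \<noteq> 0" for z
  proof -
    have "(z / f z)^2 * deriv f z - 1 = - of_real lam * z^2"
      using U_expression_inverse_quadratic[OF nz[OF z(1)] z(2)] by (simp add: f_def)
    moreover have "lam * (norm z)^2 < lam"
      using z lam by (simp add: power_less_one_iff abs_square_less_1)
    ultimately show ?thesis
      using lam by (simp add: norm_mult norm_power)
  qed
  moreover have "f holomorphic_on ?B"
    unfolding fG by (intro holomorphic_intros holG)
  ultimately show "f \<in> classU lam"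
    using df0 by (simp add: classU_def classA_def f_def)
qed

lemma classUs_id:
  assumes "0 < lam"
  shows "(\<lambda>z. z) \<in> classUs lam" and "detT21 (\<lambda>z. z) = 1" and "detT31 (\<lambda>z. z) = 1"
proof -
  have "coeff (\<lambda>z::complex. z) 2 = 0" and "coeff (\<lambda>z::complex. z) 3 = 0"
    by (simp_all add: coeff_def)
  then show "detT21 (\<lambda>z. z) = 1" and "detT31 (\<lambda>z. z) = 1"
    by (simp_all add: detT21_def detT31_def)
  have "subordinate (\<lambda>z. if z = 0 then 1 else z / z) (\<lambda>z. 1 / ((1 + z) * (1 + of_real lam * z)))"
    unfolding subordinate_def by (rule exI[of _ "\<lambda>z. 0"]) auto
  with assms show "(\<lambda>z. z) \<in> classUs lam"
    by (simp add: classUs_def classU_def classA_def)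
qed

lemma classUs_extremal_upper:
  assumes lam: "0 < lam" "lam \<le> 1"
  defines "f \<equiv> \<lambda>z. z / (1 + (1 + of_real lam) * z + of_real lam * z^2)"
  shows "f \<in> classUs lam" and "detT21 f = - lam * (2 + lam)" and "detT31 f = det31_bound lam"
proof -
  let ?l = "complex_of_real lam"
  have factor: "1 + (1 + ?l) * z + ?l * z^2 = (1 + z) * (1 + ?l * z)" for z
    by (simp add: power2_eq_square algebra_simps)
  have "1 + (1 + ?l) * z + ?l * z^2 \<noteq> 0" if "z \<in> ball 0 1" for z
    unfolding factor using one_plus_mult_nonzero[of 1 z] one_plus_mult_nonzero[of ?l z] that lam
    by auto
  note Q = classU_inverse_quadratic[OF lam(1) this]
  have a\<^sub>2: "coeff f 2 = - (1 + ?l)" and a\<^sub>3: "coeff f 3 = (1 + ?l)^2 - ?l"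
    using Q(3,4) by (simp_all add: f_def)
  have "zdiv f z = 1 / ((1 + z) * (1 + ?l * z))" for z
    using Q(2) by (simp add: f_def factor)
  then have "subordinate (zdiv f) (\<lambda>z. 1 / ((1 + z) * (1 + ?l * z)))"
    unfolding subordinate_def by (intro exI[of _ "\<lambda>z. z"]) auto
  moreover have "f \<in> classU lam"
    using Q(1) by (simp add: f_def)
  ultimately show "f \<in> classUs lam"
    using classA_zdiv(6)[of f] by (simp add: classUs_def classU_def)
  have n: "norm (coeff f 2) = 1 + lam"
    unfolding a\<^sub>2 norm_minus_cancel using lam by (simp add: norm_one_plus_of_real)
  then show "detT21 f = - lam * (2 + lam)"
    by (simp add: detT21_def power2_eq_square algebra_simps)
  have "coeff f 3 - (coeff f 2)^2 = - ?l"
    by (simp add: a\<^sub>2 a\<^sub>3 power2_eq_square algebra_simps)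
  then have "norm (coeff f 3 - (coeff f 2)^2) = lam"
    using lam by simp
  then show "detT31 f = det31_bound lam"
    unfolding detT31_eq n by (simp add: det31_bound_def power2_eq_square algebra_simps)
qed

lemma norm_one_minus_square_less:
  fixes \<eta> :: complex
  assumes \<eta>: "norm \<eta> < 1" and lam: "0 < lam" "lam \<le> 1"
  shows "lam * norm (1 - \<eta>^2) < norm (1 + of_real lam - \<eta>)"
proof -
  define a where "a = (norm (1 - \<eta>))^2"
  define \<rho> where "\<rho> = (norm \<eta>)^2"
  have "\<rho> < 1"
    using \<eta> by (simp add: \<rho>_def power_less_one_iff abs_square_less_1)
  have "(norm (1 + of_real lam - \<eta>))^2 - (lam * norm (1 - \<eta>^2))^2
      = lam^2 * (a - 1)^2 + (1 - lam) * (1 + 2 * lam) * a + 2 * lam^2 * (1 - \<rho>) * a + lam * (1 - \<rho>)"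
    unfolding a_def \<rho>_def power_mult_distrib cmod_power2
    by (simp add: power2_eq_square algebra_simps)
  also have "\<dots> > 0"
  proof -
    have "0 \<le> (1 - lam) * (1 + 2 * lam) * a" and "0 \<le> 2 * lam^2 * (1 - \<rho>) * a"
      using lam \<open>\<rho> < 1\<close> by (simp_all add: a_def)
    moreover have "0 < lam * (1 - \<rho>)"
      using lam \<open>\<rho> < 1\<close> by simp
    ultimately show ?thesis
      using zero_le_power2[of "lam * (a - 1)"] unfolding power_mult_distrib by linarith
  qed
  finally have "(lam * norm (1 - \<eta>^2))^2 < (norm (1 + of_real lam - \<eta>))^2"
    by simp
  then show ?thesis
    by (rule power_less_imp_less_base) simp
qed

lemma quadratic_no_unimodular_root:
  fixes e \<zeta> :: complex
  assumes e: "norm e = 1" and \<zeta>: "norm \<zeta> < 1" and lam: "0 < lam" "lam \<le> 1"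
  shows "(1 + e) * (1 + of_real lam * e) \<noteq> 1 + \<zeta> + of_real lam * \<zeta>^2"
proof
  let ?l = "complex_of_real lam"
  assume eq: "(1 + e) * (1 + ?l * e) = 1 + \<zeta> + ?l * \<zeta>^2"
  define \<eta> where "\<eta> = \<zeta> / e"
  have "e \<noteq> 0" using e by auto
  then have "e * (?l * e * (1 - \<eta>^2) + (1 + ?l - \<eta>)) = (1 + e) * (1 + ?l * e) - (1 + \<zeta> + ?l * \<zeta>^2)"
    by (simp add: \<eta>_def power2_eq_square field_simps)
  then have "?l * e * (1 - \<eta>^2) = - (1 + ?l - \<eta>)"
    using eq \<open>e \<noteq> 0\<close> by (simp add: add_eq_0_iff)
  then have "norm (?l * e * (1 - \<eta>^2)) = norm (1 + ?l - \<eta>)"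
    by (simp only: norm_minus_cancel)
  then have "lam * norm (1 - \<eta>^2) = norm (1 + ?l - \<eta>)"
    using e lam by (simp add: norm_mult)
  moreover have "norm \<eta> < 1"
    using e \<zeta> by (simp add: \<eta>_def norm_divide)
  ultimately show False
    using norm_one_minus_square_less[of \<eta>, OF _ lam] by simp
qed

lemma quadratic_discriminant_not_nonpos_Reals:
  fixes z :: complex
  assumes lam: "0 < lam" "lam \<le> 1" and z: "norm z < 1"
  shows "(1 + of_real lam)^2 + 4 * of_real lam * (z + of_real lam * z^2) \<notin> \<real>\<^sub>\<le>\<^sub>0"
proof
  let ?D = "(1 + of_real lam)^2 + 4 * of_real lam * (z + of_real lam * z^2) :: complex"
  define x where "x = Re z"
  define y where "y = Im z"
  assume "?D \<in> \<real>\<^sub>\<le>\<^sub>0"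
  then have re: "(1 + 2 * lam * x)^2 + lam^2 + 2 * lam - 4 * lam^2 * y^2 \<le> 0"
    and im: "4 * lam * y * (1 + 2 * lam * x) = 0"
    by (auto simp: complex_nonpos_Reals_iff x_def y_def power2_eq_square algebra_simps)
  show False
  proof (cases "y = 0")
    case True
    have "0 < lam^2 + 2 * lam"
      using lam by (simp add: add_nonneg_pos)
    then show False
      using re True zero_le_power2[of "1 + 2 * lam * x"] by simp
  next
    case False
    (* Then Re z = -1/(2 lam), so |z| >= (1 + lam)/(2 lam) >= 1. *)
    then have "2 * lam * x = -1"
      using im lam by simp
    then have "(2 * lam * x)^2 = 1"
      by simp
    then have "4 * lam^2 * x^2 = 1"
      by (simp add: power_mult_distrib)
    moreover have "4 * lam^2 * (x^2 + y^2) < 4 * lam^2"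
      using z lam by (simp add: x_def y_def cmod_power2[symmetric] power_less_one_iff abs_square_less_1)
    moreover have "(1 - lam) * (1 + 3 * lam) \<ge> 0"
      using lam by simp
    ultimately show False
      using re \<open>2 * lam * x = -1\<close> by (simp add: power2_eq_square algebra_simps)
  qed
qed

lemma image_ball_subset_ball:
  fixes w :: "complex \<Rightarrow> complex"
  assumes cont: "continuous_on (ball 0 1) w" and w0: "w 0 = 0"
    and ne1: "\<And>z. z \<in> ball 0 1 \<Longrightarrow> norm (w z) \<noteq> 1"
  shows "w ` ball 0 1 \<subseteq> ball 0 1"
proof (clarsimp)
  fix z :: complex assume z: "norm z < 1"
  show "norm (w z) < 1"
  proof (rule ccontr)
    assume "\<not> norm (w z) < 1"
    have seg: "of_real t * z \<in> ball 0 1" if "0 \<le> t" "t \<le> 1" for t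
      using z that mult_left_le_one_le[of "norm z" t] by (simp add: norm_mult)
    have "continuous_on {0..1} (\<lambda>t. norm (w (of_real t * z)))"
      by (intro continuous_intros continuous_on_compose2[OF cont]) (use seg in auto)
    then obtain t where "0 \<le> t" "t \<le> 1" "norm (w (of_real t * z)) = 1"
      using IVT'[of "\<lambda>t. norm (w (of_real t * z))" 0 1 1] \<open>\<not> norm (w z) < 1\<close> w0 by auto
    then show False
      using ne1 seg by blast
  qed
qed

lemma Schwarz_root_of_quadratic:
  assumes lam: "0 < lam" "lam \<le> 1"
  obtains w where "w holomorphic_on ball 0 1" and "w ` ball 0 1 \<subseteq> ball 0 1" and "w 0 = 0"
    and "\<And>z. (1 + w z) * (1 + of_real lam * w z) = 1 + z + of_real lam * z^2"
proof
  let ?B = "ball (0::complex) 1"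
  let ?l = "complex_of_real lam"
  define D where "D = (\<lambda>z. (1 + ?l)^2 + 4 * ?l * (z + ?l * z^2))"
  (* the root of lam w^2 + (1 + lam) w = z + lam z^2 that vanishes at 0 *)
  define w where "w = (\<lambda>z. (csqrt (D z) - (1 + ?l)) / (2 * ?l))"
  have "?l \<noteq> 0" using lam by simp
  show holw: "w holomorphic_on ?B"
    unfolding w_def D_def
    by (intro holomorphic_intros holomorphic_on_csqrt')
      (use quadratic_discriminant_not_nonpos_Reals[OF lam] \<open>?l \<noteq> 0\<close> in auto)
  have "csqrt (D 0) = of_real (1 + lam)"
    using lam by (simp add: D_def del: of_real_add)
  then show w0: "w 0 = 0"
    by (simp add: w_def)
  show weq: "(1 + w z) * (1 + ?l * w z) = 1 + z + ?l * z^2" for z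
  proof -
    have "(1 + w z) * (1 + ?l * w z) = 1 + ((csqrt (D z))^2 - (1 + ?l)^2) / (4 * ?l)"
      unfolding w_def using \<open>?l \<noteq> 0\<close> by (simp add: field_simps power2_eq_square)
    also have "\<dots> = 1 + z + ?l * z^2"
      using \<open>?l \<noteq> 0\<close> by (simp add: D_def field_simps)
    finally show ?thesis .
  qed
  show "w ` ?B \<subseteq> ?B"
  proof (rule image_ball_subset_ball[OF holomorphic_on_imp_continuous_on[OF holw] w0])
    show "norm (w z) \<noteq> 1" if "z \<in> ?B" for z
      using quadratic_no_unimodular_root[of "w z" z, OF _ _ lam] weq[of z] that by auto
  qed
qed

lemma classUs_extremal_lower:
  assumes lam: "0 < lam" "lam \<le> 1"
  defines "f \<equiv> \<lambda>z. z / (1 + z + of_real lam * z^2)"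
  shows "f \<in> classUs lam" and "detT31 f = - (lam^2)"
proof -
  let ?l = "complex_of_real lam"
  obtain w where holw: "w holomorphic_on ball 0 1" and wB: "w ` ball 0 1 \<subseteq> ball 0 1"
    and w0: "w 0 = 0" and weq: "\<And>z. (1 + w z) * (1 + ?l * w z) = 1 + z + ?l * z^2"
    using Schwarz_root_of_quadratic[OF lam] by blast
  have nz: "1 + z + ?l * z^2 \<noteq> 0" if "z \<in> ball 0 1" for z
  proof -
    have "norm (w z) < 1"
      using wB that by (auto simp: image_subset_iff)
    then show ?thesis
      using one_plus_mult_nonzero[of 1 "w z"] one_plus_mult_nonzero[of ?l "w z"] lam
        weq[of z, symmetric] by auto
  qed
  note Q = classU_inverse_quadratic[of lam 1, unfolded mult_1, OF lam(1) nz]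
  have "f \<in> classU lam"
    using Q(1) by (simp add: f_def)
  moreover have "zdiv f z = 1 / ((1 + w z) * (1 + ?l * w z))" for z
    using Q(2) by (simp add: f_def weq)
  then have "subordinate (zdiv f) (\<lambda>z. 1 / ((1 + z) * (1 + ?l * z)))"
    unfolding subordinate_def using holw wB w0 by blast
  ultimately show "f \<in> classUs lam"
    using classA_zdiv(6)[of f] by (simp add: classUs_def classU_def)
  have "coeff f 2 = - 1" and "coeff f 3 = 1 - ?l"
    using Q(3,4) by (simp_all add: f_def)
  then show "detT31 f = - (lam^2)"
    unfolding detT31_eq by simp
qed

theorem theorem2:
  fixes lam :: real
  assumes "0 < lam" and "lam \<le> 1"
  shows "(\<forall>f \<in> classU lam. - lam * (2 + lam) \<le> detT21 f \<and> detT21 f \<le> 1)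
       \<and> (\<forall>f \<in> classUs lam. - (lam^2) \<le> detT31 f \<and>
            detT31 f \<le> (if lam \<le> lambda0 then 1 else lam^2 * (1 + lam) * (3 + lam)))
       \<and> (\<exists>f \<in> classU lam. detT21 f = - lam * (2 + lam))
       \<and> (\<exists>f \<in> classU lam. detT21 f = 1)
       \<and> (\<exists>f \<in> classUs lam. detT31 f = - (lam^2))
       \<and> (\<exists>f \<in> classUs lam. detT31 f =
            (if lam \<le> lambda0 then 1 else lam^2 * (1 + lam) * (3 + lam)))"
proof -
  have bound: "(if lam \<le> lambda0 then 1 else lam^2 * (1 + lam) * (3 + lam)) = max 1 (det31_bound lam)"
    using le_lambda0_iff[of lam] assms by (auto simp: det31_bound_def max_def)
  have "\<exists>f \<in> classUs lam. detT31 f = max 1 (det31_bound lam)"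
    using classUs_id[OF assms(1)] classUs_extremal_upper[OF assms] by (cases "det31_bound lam \<le> 1") auto
  moreover note classU_detT21_bounds[OF _ assms(2)] classU_detT31_lower[OF _ assms(2)]
    classUs_detT31_upper[OF _ assms] classUs_subset_classU
    classUs_id[OF assms(1)] classUs_extremal_upper[OF assms] classUs_extremal_lower[OF assms]
  ultimately show ?thesis
    unfolding bound by blast
qed

end
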